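(* Let $\mathscr D:\mathscr N=\mathscr N_1\cup\cdots\cup\mathscr N_k$ be a pairwise binary-sized decomposition of a chemical reaction network $\mathscr N$ with set of common complexes $\mathscr C_{\mathscr D}$. If $y'-x_1-\cdots-x_q-y''$ is a path in $\mathscr N$ such that $y',y''\in\mathscr C_{\mathscr D}$ while $x_1,\dots,x_q\notin\mathscr C_{\mathscr D}$, then there is a subnetwork $\mathscr N_i$ in which $y'$ and $y''$ are connected.
   Context: A CRN $\mathscr N=(\mathscr S,\mathscr C,\mathscr R)$ is viewed as a directed graph with vertex set the complexes $\mathscr C$ and arcs the reactions $\mathscr R$. A path is a path in the underlying undirected graph (consecutive complexes joined by a reaction in either direction); two complexes are connected in a network if a path in that network joins them. A decomposition $\mathscr N=\mathscr N_1\cup\cdots\cup\mathscr N_k$ is given by a partition $\{\mathscr R_1,\dots,\mathscr R_k\}$ of $\mathscr R$, $k\ge2$; the subnetwork $\mathscr N_i$ has reaction set $\mathscr R_i$ and complex set $\mathscr C_i$ consisting of the complexes occurring in reactions of $\mathscr R_i$. The set $\mathscr C_{\mathscr D}$ of common complexes consists of all complexes lying in the complex sets of at least two distinct subnetworks; $d=|\mathscr C_{\mathscr D}|$. The decomposition is pairwise binary-sized (PBS) if there are integers $0\le b\le c\le d$ such that $|\mathscr C_i\cap\mathscr C_j|\in\{b,c\}$ for all $i\neq j$. *)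

theory Defs
  imports Main
begin

text \<open>A CRN is represented by its (finite) set of reactions R, each reaction being a
pair (reactant complex, product complex).\<close>

definition complexes_of :: "('c \<times> 'c) set \<Rightarrow> 'c set" where
  "complexes_of R = fst ` R \<union> snd ` R"

definition adj :: "('c \<times> 'c) set \<Rightarrow> 'c \<Rightarrow> 'c \<Rightarrow> bool" where
  "adj R a b \<longleftrightarrow> (a, b) \<in> R \<or> (b, a) \<in> R"

definition is_path :: "('c \<times> 'c) set \<Rightarrow> 'c list \<Rightarrow> bool" where
  "is_path R xs \<longleftrightarrow> xs \<noteq> [] \<and> set xs \<subseteq> complexes_of R \<and>
     (\<forall>i. Suc i < length xs \<longrightarrow> adj R (xs ! i) (xs ! Suc i))"

definition connected_in :: "('c \<times> 'c) set \<Rightarrow> 'c \<Rightarrow> 'c \<Rightarrow> bool" where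
  "connected_in R a b \<longleftrightarrow> (\<exists>xs. is_path R xs \<and> hd xs = a \<and> last xs = b)"

definition is_decomposition :: "('c \<times> 'c) set \<Rightarrow> nat \<Rightarrow> (nat \<Rightarrow> ('c \<times> 'c) set) \<Rightarrow> bool" where
  "is_decomposition R k Rs \<longleftrightarrow> k \<ge> 2 \<and>
     (\<forall>i\<in>{1..k}. Rs i \<noteq> {}) \<and>
     (\<forall>i\<in>{1..k}. \<forall>j\<in>{1..k}. i \<noteq> j \<longrightarrow> Rs i \<inter> Rs j = {}) \<and>
     (\<Union>i\<in>{1..k}. Rs i) = R"

definition common_complexes :: "nat \<Rightarrow> (nat \<Rightarrow> ('c \<times> 'c) set) \<Rightarrow> 'c set" where
  "common_complexes k Rs = {y. \<exists>i\<in>{1..k}. \<exists>j\<in>{1..k}. i \<noteq> j \<and>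
       y \<in> complexes_of (Rs i) \<and> y \<in> complexes_of (Rs j)}"

definition is_PBS :: "nat \<Rightarrow> (nat \<Rightarrow> ('c \<times> 'c) set) \<Rightarrow> bool" where
  "is_PBS k Rs \<longleftrightarrow> (\<exists>b c::nat. b \<le> c \<and> c \<le> card (common_complexes k Rs) \<and>
     (\<forall>i\<in>{1..k}. \<forall>j\<in>{1..k}. i \<noteq> j \<longrightarrow>
        card (complexes_of (Rs i) \<inter> complexes_of (Rs j)) \<in> {b, c}))"

end

theory Submission
  imports Defs
begin

text \<open>Consecutive reactions of the path meet in an interior complex, which is not common and
  hence lies in the complex set of only one subnetwork; so all reactions of the path belong to
  the subnetwork containing the first one.\<close>

lemma adj_in_complexes_of:
  assumes "adj S a b"
  shows "a \<in> complexes_of S" "b \<in> complexes_of S"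
  using assms unfolding adj_def complexes_of_def by (auto intro: rev_image_eqI)

lemma is_pathI_adj:
  assumes "length xs \<ge> 2" and adj: "\<And>i. Suc i < length xs \<Longrightarrow> adj S (xs ! i) (xs ! Suc i)"
  shows "is_path S xs"
proof -
  have "xs ! m \<in> complexes_of S" if "m < length xs" for m
  proof (cases "Suc m < length xs")
    case True
    from adj_in_complexes_of(1)[OF adj[OF True]] show ?thesis .
  next
    case False
    with \<open>m < length xs\<close> assms(1) obtain n where "m = Suc n" "Suc n < length xs"
      by (cases m) auto
    with adj_in_complexes_of(2)[OF adj[of n]] show ?thesis by simp
  qed
  then have "set xs \<subseteq> complexes_of S"
    by (auto simp: in_set_conv_nth)
  moreover have "xs \<noteq> []"
    using assms(1) by auto
  ultimately show ?thesis
    unfolding is_path_def using adj by blast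
qed

lemma is_decomposition_adj_block:
  assumes "is_decomposition R k Rs" and "adj R a b"
  obtains i where "i \<in> {1..k}" "adj (Rs i) a b"
  using assms unfolding is_decomposition_def adj_def by blast

lemma block_eq_if_not_common:
  assumes "i \<in> {1..k}" "j \<in> {1..k}"
    and "y \<in> complexes_of (Rs i)" "y \<in> complexes_of (Rs j)"
    and "y \<notin> common_complexes k Rs"
  shows "i = j"
  using assms unfolding common_complexes_def by blast

lemma is_path_in_block_if_interior_not_common:
  assumes dec: "is_decomposition R k Rs" and path: "is_path R L" and "length L \<ge> 2"
    and interior: "\<forall>x\<in>set (butlast (tl L)). x \<notin> common_complexes k Rs"
  obtains i where "i \<in> {1..k}" "is_path (Rs i) L"
proof -
  have edge: "adj R (L ! m) (L ! Suc m)" if "Suc m < length L" for m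
    using path that unfolding is_path_def by blast
  obtain i where i: "i \<in> {1..k}" "adj (Rs i) (L ! 0) (L ! Suc 0)"
    using is_decomposition_adj_block[OF dec edge[of 0]] \<open>length L \<ge> 2\<close> by auto
  have "adj (Rs i) (L ! m) (L ! Suc m)" if "Suc m < length L" for m
    using that
  proof (induction m)
    case 0
    then show ?case using i(2) by simp
  next
    case (Suc m)
    obtain j where j: "j \<in> {1..k}" "adj (Rs j) (L ! Suc m) (L ! Suc (Suc m))"
      using is_decomposition_adj_block[OF dec edge[OF Suc.prems]] by blast
    have "butlast (tl L) ! m = L ! Suc m" "m < length (butlast (tl L))"
      using Suc.prems by (simp_all add: nth_butlast nth_tl)
    with interior have "L ! Suc m \<notin> common_complexes k Rs" by (metis nth_mem)
    moreover have "adj (Rs i) (L ! m) (L ! Suc m)"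
      using Suc by simp
    ultimately have "j = i"
      using i(1) j by (meson adj_in_complexes_of block_eq_if_not_common)
    with j show ?case by simp
  qed
  with i(1) \<open>length L \<ge> 2\<close> show thesis by (blast intro: that is_pathI_adj)
qed

theorem lemma1:
  fixes R :: "('c \<times> 'c) set" and k :: nat and Rs :: "nat \<Rightarrow> ('c \<times> 'c) set"
    and y' y'' :: 'c and xs :: "'c list"
  assumes "finite R"
    and "is_decomposition R k Rs"
    and "is_PBS k Rs"
    and "is_path R (y' # xs @ [y''])"
    and "y' \<in> common_complexes k Rs" and "y'' \<in> common_complexes k Rs"
    and "\<forall>x\<in>set xs. x \<notin> common_complexes k Rs"
  shows "\<exists>i\<in>{1..k}. connected_in (Rs i) y' y''"
proof -
  obtain i where "i \<in> {1..k}" "is_path (Rs i) (y' # xs @ [y''])"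
    using is_path_in_block_if_interior_not_common[OF assms(2) assms(4)] assms(7) by auto
  then show ?thesis unfolding connected_in_def by force
qed

end
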